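(* Let $a\in[-1,1/3]$, $a\neq0$. For $\theta\in(2\pi/3,\pi)$ define \[ \zeta(\theta)=\frac{(2a-1)\cos\theta+\sqrt{(1-4a)\cos^2\theta+a}}{1-4a\cos^2\theta},\qquad z(\theta)=\frac{a\zeta(\theta)}{(2\cos\theta+\zeta(\theta))(1+2\zeta(\theta)\cos\theta)}, \] with $z$ extended by continuity at the removable singularity $\theta=\cos^{-1}(-1/(2\sqrt a))$ when $1/4<a\le1/3$. Then $z$ maps $(2\pi/3,\pi)$ onto the interior of \[ I_a=\left(-\infty,\ \frac{-2+9a-2\sqrt{(1-3a)^3}}{27}\right], \] i.e. onto $\left(-\infty,\frac{-2+9a-2\sqrt{(1-3a)^3}}{27}\right)$. *)

theory Defs
  imports "HOL-Analysis.Analysis"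
begin

definition zeta :: "real \<Rightarrow> real \<Rightarrow> real" where
  "zeta a \<theta> = ((2*a - 1) * cos \<theta> + sqrt ((1 - 4*a) * (cos \<theta>)^2 + a))
                 / (1 - 4*a*(cos \<theta>)^2)"

definition z_raw :: "real \<Rightarrow> real \<Rightarrow> real" where
  "z_raw a \<theta> = a * zeta a \<theta> / ((2 * cos \<theta> + zeta a \<theta>) * (1 + 2 * zeta a \<theta> * cos \<theta>))"

definition z_singular :: "real \<Rightarrow> real \<Rightarrow> bool" where
  "z_singular a \<theta> \<longleftrightarrow> 1 - 4*a*(cos \<theta>)^2 = 0
     \<or> (2 * cos \<theta> + zeta a \<theta>) * (1 + 2 * zeta a \<theta> * cos \<theta>) = 0"

definition z_fun :: "real \<Rightarrow> real \<Rightarrow> real" where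
  "z_fun a \<theta> = (if z_singular a \<theta> then Lim (at \<theta>) (z_raw a) else z_raw a \<theta>)"

end

theory Submission
  imports Defs
begin

text \<open>
  Put \<open>c = cos \<theta> \<in> (-1, -1/2)\<close> and \<open>q = 1 / (1 + 2 \<zeta> c)\<close>. Since \<open>\<zeta>\<close> is a root of
  \<open>\<zeta>\<^sup>2 + 2 c \<zeta> = a (1 + 2 c \<zeta>)\<^sup>2\<close>, the function \<open>z\<close> becomes the cubic \<open>q\<^sup>3 - q\<^sup>2 + a q\<close>, and
  \<open>q = (1 - 2c\<^sup>2 - 2c \<surd>((1-4a)c\<^sup>2 + a)) / (1 - 4c\<^sup>2)\<close> is continuous in \<open>c\<close>, tends to \<open>-\<infinity>\<close> as
  \<open>c \<rightarrow> -1/2\<close> and stays strictly below its value \<open>q\<^sub>0 = (1 - 2r)/3\<close> at \<open>c = -1\<close>, where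
  \<open>r = \<surd>(1 - 3a)\<close>. The cubic minus its value at \<open>q\<^sub>0\<close> is \<open>(q - (1+r)/3)\<^sup>2 (q - q\<^sub>0)\<close>, so
  \<open>z\<close> stays below that value, and the intermediate value theorem on \<open>[-1, c]\<close> shows that
  every smaller value is attained.
\<close>

definition zeta_sqrt :: "real \<Rightarrow> real \<Rightarrow> real" where
  "zeta_sqrt a c = sqrt ((1 - 4*a) * c^2 + a)"

definition q_cos :: "real \<Rightarrow> real \<Rightarrow> real" where
  "q_cos a c = (1 - 2*c^2 - 2*c * zeta_sqrt a c) / (1 - 4*c^2)"

definition cubic :: "real \<Rightarrow> real \<Rightarrow> real" where
  "cubic a q = q^3 - q^2 + a*q"

lemma zeta_quadratic:
  fixes a c S \<zeta> :: real
  assumes S: "S^2 = (1 - 4*a) * c^2 + a" and den: "1 - 4*a*c^2 \<noteq> 0"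
    and \<zeta>: "\<zeta> = ((2*a - 1) * c + S) / (1 - 4*a*c^2)"
  shows "\<zeta>^2 + 2*c*\<zeta> = a * (1 + 2*\<zeta>*c)^2"
proof -
  define d where "d = 1 - 4*a*c^2"
  have \<zeta>d: "\<zeta> * d = (2*a - 1) * c + S" using den unfolding \<zeta> d_def by simp
  have "(\<zeta>^2 + 2*c*\<zeta> - a * (1 + 2*\<zeta>*c)^2) * d^2
      = (\<zeta>*d)^2 + 2*c*(\<zeta>*d)*d - a * (d + 2*c*(\<zeta>*d))^2"
    by (simp add: power2_eq_square algebra_simps)
  also have "\<dots> = d * (S^2 - ((1 - 4*a) * c^2 + a))"
    unfolding \<zeta>d by (simp add: d_def power2_eq_square algebra_simps)
  finally show ?thesis using S den unfolding d_def by simp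
qed

lemma zeta_recip_eq:
  fixes a c S \<zeta> :: real
  assumes S: "S^2 = (1 - 4*a) * c^2 + a" and d: "1 - 4*a*c^2 \<noteq> 0"
    and \<zeta>: "\<zeta> = ((2*a - 1) * c + S) / (1 - 4*a*c^2)" and c: "1 - 4*c^2 \<noteq> 0"
  shows "1 + 2*\<zeta>*c \<noteq> 0" "1 / (1 + 2*\<zeta>*c) = (1 - 2*c^2 - 2*c*S) / (1 - 4*c^2)"
proof -
  define P where "P = 1 - 2*c^2 + 2*c*S"
  define N where "N = 1 - 2*c^2 - 2*c*S"
  have "P * N - (1 - 4*c^2) * (1 - 4*a*c^2) = -4*c^2 * (S^2 - ((1 - 4*a) * c^2 + a))"
    unfolding P_def N_def by (simp add: power2_eq_square algebra_simps)
  then have PN: "P * N = (1 - 4*c^2) * (1 - 4*a*c^2)" using S by simp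
  have m: "1 + 2*\<zeta>*c = P / (1 - 4*a*c^2)"
    using d unfolding \<zeta> P_def by (simp add: field_simps power2_eq_square)
  have P: "P \<noteq> 0" using PN c d by auto
  then show "1 + 2*\<zeta>*c \<noteq> 0" using m d by simp
  have "1 / (1 + 2*\<zeta>*c) = (1 - 4*a*c^2) / P" using m by simp
  also have "\<dots> = N / (1 - 4*c^2)" using PN P c by (simp add: frac_eq_eq mult.commute)
  finally show "1 / (1 + 2*\<zeta>*c) = (1 - 2*c^2 - 2*c*S) / (1 - 4*c^2)" unfolding N_def .
qed

text \<open>Here \<open>\<zeta>\<^sup>2 = a m\<^sup>2 - 2 c \<zeta> = 1 - m + a m\<^sup>2\<close>, so \<open>a \<zeta> / ((2c + \<zeta>) m) = \<zeta>\<^sup>2 / m\<^sup>3\<close> is a cubic in \<open>1/m\<close>.\<close>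
lemma cubic_of_recip:
  fixes a c \<zeta> :: real
  assumes quad: "\<zeta>^2 + 2*c*\<zeta> = a * (1 + 2*\<zeta>*c)^2"
    and nz: "1 + 2*\<zeta>*c \<noteq> 0" and a: "a \<noteq> 0"
  shows "(2*c + \<zeta>) * (1 + 2*\<zeta>*c) \<noteq> 0"
    "a * \<zeta> / ((2*c + \<zeta>) * (1 + 2*\<zeta>*c)) = cubic a (1 / (1 + 2*\<zeta>*c))"
proof -
  define m where "m = 1 + 2*\<zeta>*c"
  have quad': "\<zeta> * (2*c + \<zeta>) = a * m^2" using quad unfolding m_def by (simp add: algebra_simps power2_eq_square)
  have ne: "\<zeta> \<noteq> 0" "2*c + \<zeta> \<noteq> 0" using quad' nz a unfolding m_def by auto
  show "(2*c + \<zeta>) * (1 + 2*\<zeta>*c) \<noteq> 0" using ne nz by simp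
  have "a*\<zeta>*m^3 = \<zeta>*m*(a*m^2)" by (simp add: power2_eq_square power3_eq_cube)
  also have "\<dots> = \<zeta>^2 * ((2*c + \<zeta>) * m)" unfolding quad'[symmetric] by (simp add: power2_eq_square)
  finally have "a * \<zeta> / ((2*c + \<zeta>) * m) = \<zeta>^2 / m^3"
    using ne nz unfolding m_def[symmetric] by (simp add: frac_eq_eq)
  also have "\<zeta>^2 = 1 - m + a*m^2" using quad unfolding m_def by (simp add: algebra_simps)
  finally show "a * \<zeta> / ((2*c + \<zeta>) * (1 + 2*\<zeta>*c)) = cubic a (1 / (1 + 2*\<zeta>*c))"
    using nz unfolding m_def[symmetric] cubic_def by (simp add: field_simps power2_eq_square power3_eq_cube)
qed

lemma cos_bounds_on_arc:
  assumes "2*pi/3 < \<theta>" "\<theta> < pi"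
  shows "-1 < cos \<theta>" "cos \<theta> < -1/2"
proof -
  have "cos pi < cos \<theta>" using assms pi_gt_zero by (intro cos_monotone_0_pi) auto
  then show "-1 < cos \<theta>" by simp
  have "cos \<theta> < cos (2*pi/3)" using assms pi_gt_zero by (intro cos_monotone_0_pi) auto
  then show "cos \<theta> < -1/2" using cos_120 by simp
qed

lemma square_bounds:
  fixes c :: real
  assumes "-1 < c" "c < -1/2"
  shows "1/4 < c^2" "c^2 < 1"
proof -
  have "(c - 1/2) * (c + 1/2) > 0" using assms by (intro mult_neg_neg) auto
  then show "1/4 < c^2" by (simp add: power2_eq_square algebra_simps)
  have "(c - 1) * (c + 1) < 0" using assms by (intro mult_neg_pos) auto
  then show "c^2 < 1" by (simp add: power2_eq_square algebra_simps)
qed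

text \<open>The radicand \<open>c\<^sup>2 + a (1 - 4c\<^sup>2)\<close> is decreasing in \<open>a\<close> and equals \<open>(1 - c\<^sup>2)/3\<close> at \<open>a = 1/3\<close>.\<close>
lemma zeta_radicand_pos:
  fixes a c :: real
  assumes "a \<le> 1/3" "1/4 < c^2" "c^2 < 1"
  shows "0 < (1 - 4*a) * c^2 + a"
proof -
  have "(1/3) * (1 - 4*c^2) \<le> a * (1 - 4*c^2)"
    using assms by (intro mult_right_mono_neg) auto
  then show ?thesis using assms(3) by (simp add: algebra_simps)
qed

lemma zeta_sqrt_sq:
  assumes "a \<le> 1/3" "-1 < c" "c < -1/2"
  shows "(zeta_sqrt a c)^2 = (1 - 4*a) * c^2 + a" "0 \<le> zeta_sqrt a c"
  using zeta_radicand_pos[OF assms(1) square_bounds[OF assms(2,3)]]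
  unfolding zeta_sqrt_def by auto

lemma z_raw_eq_cubic:
  assumes a: "a \<le> 1/3" "a \<noteq> 0" and c: "-1 < cos \<theta>" "cos \<theta> < -1/2"
    and d: "1 - 4*a*(cos \<theta>)^2 \<noteq> 0"
  shows "\<not> z_singular a \<theta>" "z_raw a \<theta> = cubic a (q_cos a (cos \<theta>))"
proof -
  have \<zeta>: "zeta a \<theta> = ((2*a - 1) * cos \<theta> + zeta_sqrt a (cos \<theta>)) / (1 - 4*a*(cos \<theta>)^2)"
    unfolding zeta_def zeta_sqrt_def ..
  have S: "(zeta_sqrt a (cos \<theta>))^2 = (1 - 4*a) * (cos \<theta>)^2 + a"
    using zeta_sqrt_sq[OF a(1) c] by simp
  have c2: "1 - 4*(cos \<theta>)^2 \<noteq> 0" using square_bounds[OF c] by simp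
  note quad = zeta_quadratic[OF S d \<zeta>]
  note recip = zeta_recip_eq[OF S d \<zeta> c2]
  note z = cubic_of_recip[OF quad recip(1) a(2)]
  show "\<not> z_singular a \<theta>" using d z(1) unfolding z_singular_def by (simp add: mult.commute)
  show "z_raw a \<theta> = cubic a (q_cos a (cos \<theta>))"
    using z(2) recip(2) unfolding z_raw_def q_cos_def by (simp add: mult.commute)
qed

lemma isCont_cubic_q_cos:
  "1 - 4*c^2 \<noteq> 0 \<Longrightarrow> isCont (\<lambda>x. cubic a (q_cos a x)) c"
  unfolding cubic_def q_cos_def zeta_sqrt_def by (intro continuous_intros) auto

text \<open>At a root of \<open>1 - 4 a cos\<^sup>2 \<theta>\<close> the value of \<open>z_fun\<close> is a limit; it is the
  continuous function \<open>cubic a (q_cos a (cos \<theta>))\<close> because that root is isolated.\<close>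
lemma z_fun_eq_cubic:
  assumes a: "a \<le> 1/3" "a \<noteq> 0" and \<theta>: "2*pi/3 < \<theta>" "\<theta> < pi"
  shows "z_fun a \<theta> = cubic a (q_cos a (cos \<theta>))"
proof (cases "1 - 4*a*(cos \<theta>)^2 = 0")
  case False
  then show ?thesis
    using z_raw_eq_cubic[OF a cos_bounds_on_arc[OF \<theta>] False] unfolding z_fun_def by simp
next
  case True
  have "\<forall>\<^sub>F x in at \<theta>. cubic a (q_cos a (cos x)) = z_raw a x"
    unfolding eventually_at_topological
  proof (intro exI[of _ "{2*pi/3<..<pi}"] conjI ballI impI)
    fix x assume x: "x \<in> {2*pi/3<..<pi}" "x \<noteq> \<theta>"
    have cx: "-1 < cos x" "cos x < -1/2" using cos_bounds_on_arc x(1) by auto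
    have "1 - 4*a*(cos x)^2 \<noteq> 0"
    proof
      assume "1 - 4*a*(cos x)^2 = 0"
      then have "a * (cos x)^2 = a * (cos \<theta>)^2" using True by linarith
      then have "(cos x)^2 = (cos \<theta>)^2" using a(2) by simp
      then have "cos x = cos \<theta>"
        using cx cos_bounds_on_arc[OF \<theta>] by (auto simp: power2_eq_iff)
      then show False using x \<theta> cos_inj_pi[of x \<theta>] by auto
    qed
    then show "cubic a (q_cos a (cos x)) = z_raw a x" using z_raw_eq_cubic[OF a cx] by simp
  qed (use \<theta> in auto)
  moreover have "isCont (\<lambda>x. cubic a (q_cos a (cos x))) \<theta>"
    using square_bounds[OF cos_bounds_on_arc[OF \<theta>]]
    by (intro isCont_o2[where g = "\<lambda>c. cubic a (q_cos a c)", OF _ isCont_cubic_q_cos]) auto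
  ultimately have "(z_raw a \<longlongrightarrow> cubic a (q_cos a (cos \<theta>))) (at \<theta>)"
    unfolding isCont_def by (rule Lim_transform_eventually[rotated])
  then show ?thesis using True unfolding z_fun_def z_singular_def by (simp add: tendsto_Lim)
qed

lemma cubic_sub_critical_value:
  fixes a r q :: real
  assumes "r^2 = 1 - 3*a"
  shows "cubic a q - (-2 + 9*a - 2*r^3) / 27 = (q - (1 + r)/3)^2 * (q - (1 - 2*r)/3)"
  using assms unfolding cubic_def by algebra

lemma sqrt_one_minus_three_a:
  assumes "a \<le> 1/3"
  shows "sqrt (1 - 3*a) ^ 2 = 1 - 3*a" "0 \<le> sqrt (1 - 3*a)" "sqrt ((1 - 3*a)^3) = sqrt (1 - 3*a) ^ 3"
  using assms by (auto simp: real_sqrt_power)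

lemma cubic_less_critical_value:
  assumes a: "a \<le> 1/3" and q: "q < (1 - 2 * sqrt (1 - 3*a)) / 3"
  shows "cubic a q < (-2 + 9*a - 2 * sqrt ((1 - 3*a)^3)) / 27"
proof -
  note r = sqrt_one_minus_three_a[OF a]
  have "q \<noteq> (1 + sqrt (1 - 3*a)) / 3" using q r(2) by auto
  then have "(q - (1 + sqrt (1 - 3*a))/3)^2 * (q - (1 - 2 * sqrt (1 - 3*a))/3) < 0"
    using q by (intro mult_pos_neg) auto
  then show ?thesis using cubic_sub_critical_value[OF r(1), of q] unfolding r(3) by linarith
qed

lemma q_cos_minus_one: "q_cos a (-1) = (1 - 2 * sqrt (1 - 3*a)) / 3"
  unfolding q_cos_def zeta_sqrt_def by (simp add: field_simps)

lemma cubic_q_cos_minus_one: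
  assumes a: "a \<le> 1/3"
  shows "cubic a (q_cos a (-1)) = (-2 + 9*a - 2 * sqrt ((1 - 3*a)^3)) / 27"
  using cubic_sub_critical_value[OF sqrt_one_minus_three_a(1)[OF a], of "q_cos a (-1)"]
  unfolding q_cos_minus_one sqrt_one_minus_three_a(3)[OF a] by simp

text \<open>With \<open>T = c\<^sup>2\<close> and \<open>q\<^sub>0 = q_cos a (-1)\<close>, the claim \<open>q_cos a c < q\<^sub>0\<close> reads
  \<open>2T - 1 - q\<^sub>0 (4T - 1) < -2cS\<close>, and the difference of the squares of the two sides factors as
  \<open>(4T - 1) (1 - q\<^sub>0)\<^sup>2 (1 - T) > 0\<close>.\<close>
lemma q_cos_less_minus_one:
  assumes a: "a \<le> 1/3" and c: "-1 < c" "c < -1/2"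
  shows "q_cos a c < q_cos a (-1)"
proof -
  define r where "r = sqrt (1 - 3*a)"
  define q0 where "q0 = (1 - 2*r) / 3"
  define T where "T = c^2"
  define S where "S = zeta_sqrt a c"
  define L where "L = 2*T - 1 - q0*(4*T - 1)"
  have r: "0 \<le> r" "a = (1 - r^2) / 3" using sqrt_one_minus_three_a[OF a] unfolding r_def by auto
  have T: "1/4 < T" "T < 1" using square_bounds[OF c] unfolding T_def by auto
  have S: "S^2 = (1 - 4*a) * T + a" "0 \<le> S" using zeta_sqrt_sq[OF a c] unfolding S_def T_def by auto
  have cS: "0 \<le> -2*c*S" using c S(2) by (simp add: mult_nonpos_nonneg)
  have "(-2*c*S)^2 = 4*T*S^2" unfolding T_def by (simp add: power2_eq_square)
  then have "(-2*c*S)^2 - L^2 = 4*T*((1 - 4*a)*T + a) - L^2" unfolding S(1) by simp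
  also have "\<dots> = (4*T - 1) * (1 - q0)^2 * (1 - T)"
    unfolding L_def q0_def r(2) by (simp add: field_simps power2_eq_square)
  also have "\<dots> > 0" using T r(1) unfolding q0_def by (intro mult_pos_pos) auto
  finally have "L^2 < (-2*c*S)^2" by simp
  then have "L < -2*c*S" using cS by (rule power2_less_imp_less)
  then have "q0 * (1 - 4*T) < 1 - 2*T - 2*c*S" unfolding L_def by (simp add: algebra_simps)
  then have "q_cos a c < q0" using T unfolding q_cos_def S_def T_def by (simp add: divide_less_eq)
  then show ?thesis unfolding q_cos_minus_one q0_def r_def .
qed

lemma q_cos_unbounded_below:
  assumes a: "a \<le> 1/3"
  shows "\<exists>c. -1 < c \<and> c < -1/2 \<and> q_cos a c \<le> K"
proof -
  define e where "e = 1 / (16 * (\<bar>K\<bar> + 1))"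
  have e: "0 < e" "e \<le> 1/16" unfolding e_def by (auto simp: field_simps)
  define c where "c = - sqrt (1/4 + e)"
  have c2: "c^2 = 1/4 + e" unfolding c_def using e by simp
  have "sqrt (1/4) < sqrt (1/4 + e)" "sqrt (1/4 + e) < 1"
    using e by (simp_all only: real_sqrt_less_iff) auto
  moreover have "sqrt (1/4::real) = 1/2" by (simp add: real_sqrt_divide)
  ultimately have c: "-1 < c" "c < -1/2" unfolding c_def by auto
  have "0 \<le> (-c) * zeta_sqrt a c" using c zeta_sqrt_sq(2)[OF a c] by (intro mult_nonneg_nonneg) auto
  then have N: "1/4 \<le> 1 - 2*c^2 - 2*c * zeta_sqrt a c" using c2 e by (simp add: algebra_simps)
  have "q_cos a c = - ((1 - 2*c^2 - 2*c * zeta_sqrt a c) / (4*e))"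
    unfolding q_cos_def c2 by simp
  also have "\<dots> \<le> - ((1/4) / (4*e))" using N e by (intro le_imp_neg_le divide_right_mono) auto
  also have "\<dots> = - (\<bar>K\<bar> + 1)" unfolding e_def by (simp add: field_simps)
  also have "\<dots> \<le> K" by simp
  finally show ?thesis using c by blast
qed

lemma cubic_le_self:
  fixes a q :: real
  assumes "-1 \<le> a" "q \<le> -1"
  shows "cubic a q \<le> q"
proof -
  have "1 * 1 \<le> (-q) * (-q)" using assms(2) by (intro mult_mono) auto
  then have "1 \<le> q^2" by (simp add: power2_eq_square)
  then have "1 \<le> q^2 - q + a" using assms by linarith
  then have "q * (q^2 - q + a) \<le> q * 1" using assms(2) by (intro mult_left_mono_neg) auto
  then show ?thesis unfolding cubic_def by (simp add: power2_eq_square power3_eq_cube algebra_simps)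
qed

lemma cubic_q_cos_attains:
  assumes a: "-1 \<le> a" "a \<le> 1/3"
    and y: "y < (-2 + 9*a - 2 * sqrt ((1 - 3*a)^3)) / 27"
  shows "\<exists>c. -1 < c \<and> c < -1/2 \<and> cubic a (q_cos a c) = y"
proof -
  define F where "F c = cubic a (q_cos a c)" for c
  obtain c1 where c1: "-1 < c1" "c1 < -1/2" "q_cos a c1 \<le> min (-1) y"
    using q_cos_unbounded_below[OF a(2)] by blast
  have "F c1 \<le> y" using cubic_le_self[OF a(1)] c1(3) unfolding F_def by fastforce
  moreover have "y < F (-1)" using y cubic_q_cos_minus_one[OF a(2)] unfolding F_def by simp
  moreover have "continuous_on {-1..c1} F"
  proof (intro continuous_at_imp_continuous_on ballI)
    fix x assume "x \<in> {-1..c1}"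
    then have "0 < (x - 1/2) * (x + 1/2)" using c1(2) by (intro mult_neg_neg) auto
    then have "1 - 4*x^2 \<noteq> 0" by (simp add: power2_eq_square algebra_simps)
    then show "isCont F x" unfolding F_def by (rule isCont_cubic_q_cos)
  qed
  ultimately obtain c where c: "-1 \<le> c" "c \<le> c1" "F c = y"
    using IVT2'[of F c1 y "-1"] c1 by auto
  moreover have "c \<noteq> -1" using c(3) \<open>y < F (-1)\<close> by auto
  ultimately have "-1 < c" "c < -1/2" "cubic a (q_cos a c) = y" using c1 unfolding F_def by auto
  then show ?thesis by blast
qed

lemma arccos_on_arc:
  assumes "-1 < c" "c < -1/2"
  shows "2*pi/3 < arccos c" "arccos c < pi"
proof -
  have "arccos (-(1/2)) < arccos c" using assms by (intro arccos_less_arccos) auto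
  then show "2*pi/3 < arccos c" by simp
  have "arccos c < arccos (-1)" using assms by (intro arccos_less_arccos) auto
  then show "arccos c < pi" by simp
qed

theorem lemma2p9:
  fixes a :: real
  assumes "-1 \<le> a" and "a \<le> 1/3" and "a \<noteq> 0"
  shows "z_fun a ` {2*pi/3<..<pi} = {..< (-2 + 9*a - 2 * sqrt ((1 - 3*a)^3)) / 27}"
proof (intro equalityI subsetI)
  fix y assume "y \<in> z_fun a ` {2*pi/3<..<pi}"
  then obtain \<theta> where \<theta>: "2*pi/3 < \<theta>" "\<theta> < pi" and y: "y = cubic a (q_cos a (cos \<theta>))"
    using z_fun_eq_cubic[OF assms(2,3)] by auto
  have "q_cos a (cos \<theta>) < (1 - 2 * sqrt (1 - 3*a)) / 3"
    using q_cos_less_minus_one[OF assms(2) cos_bounds_on_arc[OF \<theta>]] q_cos_minus_one by simp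
  then show "y \<in> {..< (-2 + 9*a - 2 * sqrt ((1 - 3*a)^3)) / 27}"
    using cubic_less_critical_value[OF assms(2)] y by simp
next
  fix y assume "y \<in> {..< (-2 + 9*a - 2 * sqrt ((1 - 3*a)^3)) / 27}"
  then obtain c where c: "-1 < c" "c < -1/2" and y: "cubic a (q_cos a c) = y"
    using cubic_q_cos_attains[OF assms(1,2)] by auto
  have "z_fun a (arccos c) = y"
    using z_fun_eq_cubic[OF assms(2,3) arccos_on_arc[OF c]] c y by simp
  then show "y \<in> z_fun a ` {2*pi/3<..<pi}" using arccos_on_arc[OF c] by force
qed

end
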